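(* Let $\mathbb{F}$ be an algebraically closed field. If $\mathcal{A}\subseteq\mathbf{O}$ is a non-zero (not necessarily unital) subalgebra, then there exists $g\in{\rm G}_2$ such that $1_{\mathbf{O}}\in g\mathcal{A}$ or $\mathbf{u}_1\in g\mathcal{A}$ or $e_1\in g\mathcal{A}$. In particular, if $\mathrm{char}\,\mathbb{F}=2$ and $\mathcal{A}$ is a non-zero subalgebra of $\mathbf{O}$ not contained in $\mathbf{O}_0=\{a\in\mathbf{O}\mid\mathrm{tr}(a)=0\}$, then there exists $g\in{\rm G}_2$ such that $e_1\in g\mathcal{A}$.
   Context: The split octonion algebra $\mathbf{O}$ is the 8-dimensional $\mathbb{F}$-vector space of formal matrices $a=\begin{pmatrix}\alpha&\mathbf{u}\\ \mathbf{v}&\beta\end{pmatrix}$ with $\alpha,\beta\in\mathbb{F}$, $\mathbf{u},\mathbf{v}\in\mathbb{F}^3$, with multiplication $\begin{pmatrix}\alpha&\mathbf{u}\\ \mathbf{v}&\beta\end{pmatrix}\begin{pmatrix}\alpha'&\mathbf{u}'\\ \mathbf{v}'&\beta'\end{pmatrix}=\begin{pmatrix}\alpha\alpha'+\mathbf{u}\cdot\mathbf{v}'&\alpha\mathbf{u}'+\beta'\mathbf{u}-\mathbf{v}\times\mathbf{v}'\\ \alpha'\mathbf{v}+\beta\mathbf{v}'+\mathbf{u}\times\mathbf{u}'&\beta\beta'+\mathbf{v}\cdot\mathbf{u}'\end{pmatrix}$ (dot product and cross product on $\mathbb{F}^3$). Trace $\mathrm{tr}(a)=\alpha+\beta$.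 With $\mathbf{c}_1,\mathbf{c}_2,\mathbf{c}_3$ the standard basis of $\mathbb{F}^3$: $e_1$ has $\alpha=1$ and all else $0$, $e_2$ has $\beta=1$ and all else $0$, $\mathbf{u}_1$ has $\mathbf{u}=\mathbf{c}_1$ and all else $0$; $1_{\mathbf{O}}=e_1+e_2$. ${\rm G}_2=\mathrm{Aut}(\mathbf{O})$. *)

theory Defs
  imports "HOL-Computational_Algebra.Polynomial"
begin

datatype 'a vec3 = V3 'a 'a 'a

fun vadd :: "'a::field vec3 \<Rightarrow> 'a vec3 \<Rightarrow> 'a vec3" where
  "vadd (V3 a b c) (V3 x y z) = V3 (a + x) (b + y) (c + z)"

fun vscale :: "'a::field \<Rightarrow> 'a vec3 \<Rightarrow> 'a vec3" where
  "vscale t (V3 a b c) = V3 (t * a) (t * b) (t * c)"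

fun vneg :: "'a::field vec3 \<Rightarrow> 'a vec3" where
  "vneg (V3 a b c) = V3 (- a) (- b) (- c)"

fun vdot :: "'a::field vec3 \<Rightarrow> 'a vec3 \<Rightarrow> 'a" where
  "vdot (V3 a b c) (V3 x y z) = a * x + b * y + c * z"

fun vcross :: "'a::field vec3 \<Rightarrow> 'a vec3 \<Rightarrow> 'a vec3" where
  "vcross (V3 a b c) (V3 x y z) = V3 (b * z - c * y) (c * x - a * z) (a * y - b * x)"

definition vzero :: "'a::field vec3" where "vzero = V3 0 0 0"

text \<open>Split octonions: formal matrices (alpha, u; v, beta).\<close>
datatype 'a oct = Oct 'a "'a vec3" "'a vec3" 'a

fun oadd :: "'a::field oct \<Rightarrow> 'a oct \<Rightarrow> 'a oct" where
  "oadd (Oct a u v b) (Oct a' u' v' b') = Oct (a + a') (vadd u u') (vadd v v') (b + b')"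

fun oscale :: "'a::field \<Rightarrow> 'a oct \<Rightarrow> 'a oct" where
  "oscale t (Oct a u v b) = Oct (t * a) (vscale t u) (vscale t v) (t * b)"

fun omult :: "'a::field oct \<Rightarrow> 'a oct \<Rightarrow> 'a oct" where
  "omult (Oct a u v b) (Oct a' u' v' b') =
     Oct (a * a' + vdot u v')
         (vadd (vadd (vscale a u') (vscale b' u)) (vneg (vcross v v')))
         (vadd (vadd (vscale a' v) (vscale b v')) (vcross u u'))
         (b * b' + vdot v u')"

fun otr :: "'a::field oct \<Rightarrow> 'a" where
  "otr (Oct a u v b) = a + b"

definition ozero :: "'a::field oct" where "ozero = Oct 0 vzero vzero 0"
definition oe1 :: "'a::field oct" where "oe1 = Oct 1 vzero vzero 0"
definition oe2 :: "'a::field oct" where "oe2 = Oct 0 vzero vzero 1"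
definition oone :: "'a::field oct" where "oone = oadd oe1 oe2"
definition ou1 :: "'a::field oct" where "ou1 = Oct 0 (V3 1 0 0) vzero 0"

definition is_subalgebra :: "'a::field oct set \<Rightarrow> bool" where
  "is_subalgebra A \<longleftrightarrow> ozero \<in> A \<and>
     (\<forall>x\<in>A. \<forall>y\<in>A. oadd x y \<in> A) \<and>
     (\<forall>t. \<forall>x\<in>A. oscale t x \<in> A) \<and>
     (\<forall>x\<in>A. \<forall>y\<in>A. omult x y \<in> A)"

definition G2 :: "('a::field oct \<Rightarrow> 'a oct) set" where
  "G2 = {g. bij g \<and> (\<forall>x y. g (oadd x y) = oadd (g x) (g y)) \<and>
             (\<forall>t x. g (oscale t x) = oscale t (g x)) \<and>
             (\<forall>x y. g (omult x y) = omult (g x) (g y))}"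

definition O0 :: "'a::field oct set" where "O0 = {a. otr a = 0}"

end

theory Submission
  imports Defs
begin

text \<open>Every octonion satisfies x^2 = tr(x) x - n(x) 1 with n(x) = a b - u \<bullet> v, and
  automorphisms preserve trace and norm. A subalgebra containing an element of nonzero norm
  therefore contains 1. A nonzero element of norm zero is moved by explicit automorphisms (shears,
  the swap exchanging a with b and u with v, and the action of SL3 on u and v) to Oct (tr x) w 0 0:
  for trace 1 one more shear gives e1, and for trace 0 the SL3 action turns w into a multiple of u1.
  In characteristic 2, x + s 1 has the trace of x and norm n(x) + s tr(x) + s^2, which vanishes
  for a root s of this quadratic.\<close>

fun onorm :: "'a::field oct \<Rightarrow> 'a" where
  "onorm (Oct a u v b) = a * b - vdot u v"

lemma oct_exhaust_coords:
  obtains a u1 u2 u3 v1 v2 v3 b where "x = Oct a (V3 u1 u2 u3) (V3 v1 v2 v3) b"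
  by (metis oct.exhaust vec3.exhaust)

lemma oct_all_coords:
  "(\<forall>x. P x) \<longleftrightarrow> (\<forall>a u1 u2 u3 v1 v2 v3 b. P (Oct a (V3 u1 u2 u3) (V3 v1 v2 v3) b))"
  by (metis oct_exhaust_coords)

lemma omult_oone_left: "omult oone x = x"
  and omult_oone_right: "omult x oone = x"
  by (cases x rule: oct_exhaust_coords; simp add: oone_def oe1_def oe2_def vzero_def)+

lemma omult_self: "omult x x = oadd (oscale (otr x) x) (oscale (- onorm x) oone)"
  by (cases x rule: oct_exhaust_coords) (simp add: oone_def oe1_def oe2_def vzero_def algebra_simps)

lemma oct_coeffs_unique:
  assumes "oadd (oscale s x) (oscale t oone) = oadd (oscale s' x) (oscale t' oone)"
    and "x \<notin> range (\<lambda>c. oscale c oone)"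
  shows "s = s' \<and> t = t'"
proof (cases "s = s'")
  case True
  then show ?thesis
    using assms(1) by (cases x rule: oct_exhaust_coords)
      (simp add: oone_def oe1_def oe2_def vzero_def)
next
  case False
  then have "x = oscale ((t' - t) / (s - s')) oone"
    using assms(1) by (cases x rule: oct_exhaust_coords)
      (auto simp: oone_def oe1_def oe2_def vzero_def field_simps)
  with assms(2) show ?thesis by blast
qed

lemma G2_intro_inverse:
  assumes "\<forall>x. f' (f x) = x" "\<forall>x. f (f' x) = x"
    and "\<forall>x y. f (oadd x y) = oadd (f x) (f y)"
    and "\<forall>t x. f (oscale t x) = oscale t (f x)"
    and "\<forall>x y. f (omult x y) = omult (f x) (f y)"
  shows "f \<in> G2"
  unfolding G2_def using assms by (auto intro!: o_bij[of f'])

lemma G2_comp: "g \<in> G2 \<Longrightarrow> h \<in> G2 \<Longrightarrow> g \<circ> h \<in> G2"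
  unfolding G2_def by (auto intro: bij_comp)

lemma G2_oadd: "g \<in> G2 \<Longrightarrow> g (oadd x y) = oadd (g x) (g y)"
  and G2_oscale: "g \<in> G2 \<Longrightarrow> g (oscale t x) = oscale t (g x)"
  and G2_omult: "g \<in> G2 \<Longrightarrow> g (omult x y) = omult (g x) (g y)"
  and G2_inj: "g \<in> G2 \<Longrightarrow> inj g"
  and G2_surj: "g \<in> G2 \<Longrightarrow> surj g"
  unfolding G2_def bij_def by blast+

lemma oscale_zero: "oscale 0 x = ozero"
  by (cases x rule: oct_exhaust_coords) (simp add: ozero_def vzero_def)

lemma G2_ozero: "g \<in> G2 \<Longrightarrow> g ozero = ozero"
  by (metis G2_oscale oscale_zero)

lemma G2_oone:
  assumes "g \<in> G2" shows "g oone = oone"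
proof -
  obtain y where y: "g y = oone" using G2_surj[OF assms] by (metis surjD)
  have "g oone = omult (g oone) (g y)" by (simp add: y omult_oone_right)
  also have "\<dots> = g (omult oone y)" by (simp add: G2_omult[OF assms])
  also have "\<dots> = oone" by (simp add: omult_oone_left y)
  finally show ?thesis .
qed

text \<open>Trace and norm are the coefficients of the quadratic equation omult_self, which
  automorphisms preserve; its coefficients are unique unless x is a scalar, and scalars are fixed.\<close>
lemma G2_otr_onorm:
  assumes g: "g \<in> G2" shows "otr (g x) = otr x \<and> onorm (g x) = onorm x"
proof (cases "x \<in> range (\<lambda>c. oscale c oone)")
  case True
  then obtain c where "x = oscale c oone" by blast
  then have "g x = x" by (simp add: G2_oscale[OF g] G2_oone[OF g])
  then show ?thesis by simp
next
  case False
  have "g x \<notin> range (\<lambda>c. oscale c oone)"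
  proof
    assume "g x \<in> range (\<lambda>c. oscale c oone)"
    then obtain c where "g x = g (oscale c oone)" by (auto simp: G2_oscale[OF g] G2_oone[OF g])
    with False G2_inj[OF g] show False by (auto dest: injD)
  qed
  moreover have "oadd (oscale (otr (g x)) (g x)) (oscale (- onorm (g x)) oone)
      = oadd (oscale (otr x) (g x)) (oscale (- onorm x) oone)"
    by (metis omult_self G2_omult[OF g] G2_oadd[OF g] G2_oscale[OF g] G2_oone[OF g])
  ultimately show ?thesis by (auto dest: oct_coeffs_unique)
qed

definition G2_conj :: "'a::field oct \<Rightarrow> 'a oct \<Rightarrow> bool" where
  "G2_conj x y \<longleftrightarrow> (\<exists>g\<in>G2. g x = y)"

lemma G2_conjI: "g \<in> G2 \<Longrightarrow> G2_conj x (g x)"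
  unfolding G2_conj_def by blast

lemma G2_conj_refl: "G2_conj x x"
  using G2_conjI[of id] by (simp add: G2_def)

lemma G2_conj_trans: "G2_conj x y \<Longrightarrow> G2_conj y z \<Longrightarrow> G2_conj x z"
  unfolding G2_conj_def by (metis G2_comp comp_apply)

lemma G2_conj_oscale: "G2_conj x y \<Longrightarrow> G2_conj (oscale t x) (oscale t y)"
  unfolding G2_conj_def by (metis G2_oscale)

lemma G2_conj_otr: "G2_conj x y \<Longrightarrow> otr y = otr x"
  and G2_conj_onorm: "G2_conj x y \<Longrightarrow> onorm y = onorm x"
  unfolding G2_conj_def using G2_otr_onorm by blast+

lemma G2_conj_ozero: "G2_conj x y \<Longrightarrow> y = ozero \<longleftrightarrow> x = ozero"
  unfolding G2_conj_def by (metis G2_inj G2_ozero injD)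

fun oct_swap :: "'a::field oct \<Rightarrow> 'a oct" where
  "oct_swap (Oct a u v b) = Oct b (vneg v) (vneg u) a"

fun oct_shear :: "'a::field vec3 \<Rightarrow> 'a oct \<Rightarrow> 'a oct" where
  "oct_shear p (Oct a u v b) =
     Oct (a + vdot p v) (vadd u (vscale (b - a - vdot p v) p)) (vadd v (vcross u p)) (b - vdot p v)"

text \<open>Induced by the transvection matrix E = I + s E21 + t E31, acting on u by E and on v
  by its inverse transpose.\<close>
fun oct_transvection :: "'a::field \<Rightarrow> 'a \<Rightarrow> 'a oct \<Rightarrow> 'a oct" where
  "oct_transvection s t (Oct a (V3 u1 u2 u3) (V3 v1 v2 v3) b) =
     Oct a (V3 u1 (u2 + s * u1) (u3 + t * u1)) (V3 (v1 - s * v2 - t * v3) v2 v3) b"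

fun oct_cycle :: "'a::field oct \<Rightarrow> 'a oct" where
  "oct_cycle (Oct a (V3 u1 u2 u3) (V3 v1 v2 v3) b) = Oct a (V3 u3 u1 u2) (V3 v3 v1 v2) b"

lemma oct_swap_G2: "oct_swap \<in> G2"
  by (rule G2_intro_inverse[of oct_swap]; simp only: oct_all_coords; simp add: algebra_simps)

lemma oct_shear_G2: "oct_shear p \<in> G2"
  by (cases p, rule G2_intro_inverse[of "oct_shear (vneg p)"];
      simp only: oct_all_coords; simp add: algebra_simps)

lemma oct_transvection_G2: "oct_transvection s t \<in> G2"
  by (rule G2_intro_inverse[of "oct_transvection (- s) (- t)"];
      simp only: oct_all_coords; simp add: algebra_simps)

lemma oct_cycle_G2: "oct_cycle \<in> G2"
  by (rule G2_intro_inverse[of "oct_cycle \<circ> oct_cycle"];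
      simp only: oct_all_coords; simp add: algebra_simps)

lemma exists_vdot_eq:
  assumes "v \<noteq> vzero" shows "\<exists>p. vdot p v = c"
proof -
  obtain v1 v2 v3 where v: "v = V3 v1 v2 v3" by (cases v)
  consider "v1 \<noteq> 0" | "v2 \<noteq> 0" | "v3 \<noteq> 0" using assms v by (auto simp: vzero_def)
  then show ?thesis
  proof cases
    case 1 then show ?thesis by (intro exI[of _ "V3 (c / v1) 0 0"]) (simp add: v)
  next
    case 2 then show ?thesis by (intro exI[of _ "V3 0 (c / v2) 0"]) (simp add: v)
  next
    case 3 then show ?thesis by (intro exI[of _ "V3 0 0 (c / v3)"]) (simp add: v)
  qed
qed

lemma G2_conj_beta_nonzero:
  assumes "x \<noteq> ozero" shows "\<exists>a u v b. b \<noteq> 0 \<and> G2_conj x (Oct a u v b)"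
proof -
  have from_v: "\<exists>a' u' v' b'. b' \<noteq> 0 \<and> G2_conj (Oct a u v b) (Oct a' u' v' b')"
    if v: "v \<noteq> vzero" for a b :: 'a and u v
  proof -
    obtain p where "vdot p v = b - 1" using exists_vdot_eq[OF v] by blast
    then obtain a' u' v' where "oct_shear p (Oct a u v b) = Oct a' u' v' 1" by simp
    then show ?thesis using G2_conjI[OF oct_shear_G2] one_neq_zero by metis
  qed
  obtain a u v b where x: "x = Oct a u v b" by (cases x)
  consider "b \<noteq> 0" | "a \<noteq> 0" | "v \<noteq> vzero" | "u \<noteq> vzero"
    using assms x by (auto simp: ozero_def)
  then show ?thesis
  proof cases
    case 1 then show ?thesis using x G2_conj_refl by blast
  next
    case 2 then show ?thesis using x G2_conjI[OF oct_swap_G2, of x] by auto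
  next
    case 3 then show ?thesis using x from_v by blast
  next
    case 4
    then have "vneg u \<noteq> vzero" by (cases u) (simp add: vzero_def)
    then obtain a' u' v' b' where "b' \<noteq> 0" "G2_conj (oct_swap x) (Oct a' u' v' b')"
      using from_v[of "vneg u" b "vneg v" a] x by auto
    then show ?thesis using G2_conjI[OF oct_swap_G2, of x] G2_conj_trans by blast
  qed
qed

text \<open>Norm zero means a b = u \<bullet> v, so the shear by -u/b clears both a and u.\<close>
lemma oct_shear_clears_u:
  assumes "b \<noteq> 0" "onorm (Oct a u v b) = 0"
  shows "oct_shear (vscale (- 1 / b) u) (Oct a u v b) = Oct 0 vzero v (a + b)"
proof -
  have "vdot (vscale (- 1 / b) u) v = - a"
    using assms by (cases u, cases v) (simp add: field_simps)
  then show ?thesis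
    unfolding oct_shear.simps using assms(1) by (cases u, cases v) (simp add: vzero_def field_simps)
qed

lemma norm_zero_G2_conj_normal_form:
  assumes "onorm x = 0" "x \<noteq> ozero"
  shows "\<exists>w. G2_conj x (Oct (otr x) w vzero 0)"
proof -
  obtain a u v b where b: "b \<noteq> 0" and y: "G2_conj x (Oct a u v b)"
    using G2_conj_beta_nonzero[OF assms(2)] by blast
  have n: "onorm (Oct a u v b) = 0" and t: "a + b = otr x"
    using G2_conj_onorm[OF y] G2_conj_otr[OF y] assms(1) by simp_all
  have "G2_conj (Oct a u v b) (Oct 0 vzero v (otr x))"
    using G2_conjI[OF oct_shear_G2, of "Oct a u v b"] oct_shear_clears_u[OF b n] t by metis
  moreover have "G2_conj (Oct 0 vzero v (otr x)) (Oct (otr x) (vneg v) vzero 0)"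
    using G2_conjI[OF oct_swap_G2, of "Oct 0 vzero v (otr x)"] by (simp add: vzero_def)
  ultimately show ?thesis using y G2_conj_trans by blast
qed

lemma trace_one_norm_zero_G2_conj_oe1:
  assumes "otr x = 1" "onorm x = 0" shows "G2_conj x oe1"
proof -
  have "x \<noteq> ozero" using assms(1) by (auto simp: ozero_def)
  then obtain w where w: "G2_conj x (Oct 1 w vzero 0)"
    using norm_zero_G2_conj_normal_form[OF assms(2)] assms(1) by auto
  have shear: "oct_shear w (Oct 1 w vzero 0) = oe1"
    by (cases w) (simp add: oe1_def vzero_def)
  show ?thesis
    using G2_conj_trans[OF w G2_conjI[OF oct_shear_G2, of "Oct 1 w vzero 0" w]] unfolding shear .
qed

lemma G2_conj_oscale_ou1:
  assumes "w \<noteq> vzero" shows "\<exists>c. c \<noteq> 0 \<and> G2_conj (Oct 0 w vzero 0) (oscale c ou1)"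
proof -
  have first_coord: "\<exists>c. c \<noteq> 0 \<and> G2_conj (Oct 0 (V3 w1 w2 w3) vzero 0) (oscale c ou1)"
    if "w1 \<noteq> 0" for w1 w2 w3 :: 'a
  proof -
    let ?w = "Oct 0 (V3 w1 w2 w3) vzero 0"
    have transv: "oct_transvection (- w2 / w1) (- w3 / w1) ?w = oscale w1 ou1"
      using that by (simp add: vzero_def ou1_def)
    show ?thesis
      using that G2_conjI[OF oct_transvection_G2, of ?w "- w2 / w1" "- w3 / w1"]
      unfolding transv by blast
  qed
  obtain w1 w2 w3 where w: "w = V3 w1 w2 w3" by (cases w)
  consider "w1 \<noteq> 0" | "w3 \<noteq> 0" | "w2 \<noteq> 0" using assms w by (auto simp: vzero_def)
  then show ?thesis
  proof cases
    case 1 then show ?thesis using first_coord w by blast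
  next
    case 2
    have "G2_conj (Oct 0 w vzero 0) (Oct 0 (V3 w3 w1 w2) vzero 0)"
      using G2_conjI[OF oct_cycle_G2, of "Oct 0 w vzero 0"] by (simp add: w vzero_def)
    then show ?thesis using first_coord[OF 2] G2_conj_trans by blast
  next
    case 3
    have "G2_conj (Oct 0 w vzero 0) (Oct 0 (V3 w2 w3 w1) vzero 0)"
      using G2_conjI[OF G2_comp[OF oct_cycle_G2 oct_cycle_G2], of "Oct 0 w vzero 0"]
      by (simp add: w vzero_def)
    then show ?thesis using first_coord[OF 3] G2_conj_trans by blast
  qed
qed

lemma trace_zero_norm_zero_G2_conj_ou1:
  assumes "otr x = 0" "onorm x = 0" "x \<noteq> ozero"
  shows "\<exists>c. c \<noteq> 0 \<and> G2_conj x (oscale c ou1)"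
proof -
  obtain w where w: "G2_conj x (Oct 0 w vzero 0)"
    using norm_zero_G2_conj_normal_form[OF assms(2,3)] assms(1) by auto
  then have "w \<noteq> vzero" using G2_conj_ozero[OF w] assms(3) by (auto simp: ozero_def)
  then show ?thesis using G2_conj_oscale_ou1 w G2_conj_trans by blast
qed

lemma otr_oscale: "otr (oscale t x) = t * otr x"
  and onorm_oscale: "onorm (oscale t x) = t^2 * onorm x"
  by (cases x rule: oct_exhaust_coords; simp add: algebra_simps power2_eq_square)+

lemma otr_oadd_oone: "otr (oadd x (oscale s oone)) = otr x + 2 * s"
  and onorm_oadd_oone: "onorm (oadd x (oscale s oone)) = onorm x + s * otr x + s^2"
  by (cases x rule: oct_exhaust_coords;
      simp add: oone_def oe1_def oe2_def vzero_def algebra_simps power2_eq_square)+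

lemma oone_eq_of_onorm_nonzero:
  assumes "onorm x \<noteq> 0"
  shows "oscale (- 1 / onorm x) (oadd (omult x x) (oscale (- otr x) x)) = oone"
  using assms by (cases x rule: oct_exhaust_coords)
    (simp add: oone_def oe1_def oe2_def vzero_def field_simps)

lemma is_subalgebra_oadd: "is_subalgebra A \<Longrightarrow> x \<in> A \<Longrightarrow> y \<in> A \<Longrightarrow> oadd x y \<in> A"
  and is_subalgebra_oscale: "is_subalgebra A \<Longrightarrow> x \<in> A \<Longrightarrow> oscale t x \<in> A"
  and is_subalgebra_omult: "is_subalgebra A \<Longrightarrow> x \<in> A \<Longrightarrow> y \<in> A \<Longrightarrow> omult x y \<in> A"
  and is_subalgebra_ozero: "is_subalgebra A \<Longrightarrow> ozero \<in> A"
  unfolding is_subalgebra_def by blast+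

lemma subalgebra_oone_mem:
  assumes "is_subalgebra A" "x \<in> A" "onorm x \<noteq> 0" shows "oone \<in> A"
proof -
  have "oscale (- 1 / onorm x) (oadd (omult x x) (oscale (- otr x) x)) \<in> A"
    using assms(1,2) by (intro is_subalgebra_oadd is_subalgebra_oscale is_subalgebra_omult)
  then show ?thesis using oone_eq_of_onorm_nonzero[OF assms(3)] by simp
qed

lemma G2_image_memI: "x \<in> A \<Longrightarrow> G2_conj x y \<Longrightarrow> \<exists>g\<in>G2. y \<in> g ` A"
  unfolding G2_conj_def by blast

lemma subalgebra_G2_image_oe1:
  assumes "is_subalgebra A" "x \<in> A" "otr x \<noteq> 0" "onorm x = 0"
  shows "\<exists>g\<in>G2. oe1 \<in> g ` A"
proof -
  let ?e = "oscale (1 / otr x) x"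
  have "G2_conj ?e oe1"
    using assms(3,4)
    by (intro trace_one_norm_zero_G2_conj_oe1) (simp_all add: otr_oscale onorm_oscale)
  then show ?thesis using G2_image_memI[OF is_subalgebra_oscale[OF assms(1,2)]] by blast
qed

lemma subalgebra_G2_image_ou1:
  assumes "is_subalgebra A" "x \<in> A" "otr x = 0" "onorm x = 0" "x \<noteq> ozero"
  shows "\<exists>g\<in>G2. ou1 \<in> g ` A"
proof -
  obtain c where c: "c \<noteq> 0" and conj: "G2_conj x (oscale c ou1)"
    using trace_zero_norm_zero_G2_conj_ou1 assms(3-5) by blast
  have "oscale (1 / c) (oscale c ou1) = ou1" using c by (simp add: ou1_def vzero_def)
  then have "G2_conj (oscale (1 / c) x) ou1" using G2_conj_oscale[OF conj, of "1 / c"] by simp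
  then show ?thesis using G2_image_memI[OF is_subalgebra_oscale[OF assms(1,2)]] by blast
qed

lemma monic_quadratic_has_root: "\<exists>s :: 'a :: alg_closed_field. s^2 + b * s + c = 0"
  using alg_closed_imp_poly_has_root[of "[:c, b, 1:]"]
  by (auto simp: algebra_simps power2_eq_square)

lemma char2_subalgebra_norm_zero_mem:
  fixes x :: "'a :: alg_closed_field oct"
  assumes "CHAR('a) = 2" "is_subalgebra A" "x \<in> A" "onorm x \<noteq> 0"
  shows "\<exists>y\<in>A. otr y = otr x \<and> onorm y = 0"
proof -
  obtain s where s: "s^2 + otr x * s + onorm x = 0"
    using monic_quadratic_has_root by blast
  let ?y = "oadd x (oscale s oone)"
  have "?y \<in> A"
    using subalgebra_oone_mem assms(2-4) by (intro is_subalgebra_oadd is_subalgebra_oscale)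
  moreover have "(2 :: 'a) = 0" using of_nat_CHAR[where 'a='a] assms(1) by simp
  then have "otr ?y = otr x" by (simp add: otr_oadd_oone)
  moreover have "onorm ?y = 0" using s by (simp add: onorm_oadd_oone ac_simps)
  ultimately show ?thesis by blast
qed

lemma nonzero_subalgebra_G2_image:
  assumes "is_subalgebra A" "A \<noteq> {ozero}"
  shows "\<exists>g\<in>G2. oone \<in> g ` A \<or> ou1 \<in> g ` A \<or> oe1 \<in> g ` A"
proof -
  obtain x where x: "x \<in> A" "x \<noteq> ozero" using assms is_subalgebra_ozero by blast
  consider "onorm x \<noteq> 0" | "otr x \<noteq> 0" "onorm x = 0" | "otr x = 0" "onorm x = 0" by blast
  then show ?thesis
  proof cases
    case 1
    have "\<exists>g\<in>G2. oone \<in> g ` A"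
      using G2_image_memI[OF subalgebra_oone_mem[OF assms(1) x(1) 1] G2_conj_refl] .
    then show ?thesis by blast
  next
    case 2 then show ?thesis using subalgebra_G2_image_oe1[OF assms(1) x(1)] by blast
  next
    case 3 then show ?thesis using subalgebra_G2_image_ou1[OF assms(1) x(1) _ _ x(2)] by blast
  qed
qed

lemma char2_subalgebra_G2_image_oe1:
  fixes A :: "'a :: alg_closed_field oct set"
  assumes "CHAR('a) = 2" "is_subalgebra A" "\<not> A \<subseteq> O0"
  shows "\<exists>g\<in>G2. oe1 \<in> g ` A"
proof -
  obtain x where x: "x \<in> A" "otr x \<noteq> 0" using assms(3) unfolding O0_def by blast
  obtain y where "y \<in> A" "otr y \<noteq> 0" "onorm y = 0"
  proof (cases "onorm x = 0")
    case True then show ?thesis using that x by blast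
  next
    case False
    then show ?thesis using that char2_subalgebra_norm_zero_mem[OF assms(1,2) x(1)] x(2) by auto
  qed
  then show ?thesis using subalgebra_G2_image_oe1[OF assms(2)] by blast
qed

theorem lemma6p6:
  shows "(\<forall>A :: 'a::alg_closed_field oct set.
            is_subalgebra A \<and> A \<noteq> {ozero} \<longrightarrow>
            (\<exists>g\<in>G2. oone \<in> g ` A \<or> ou1 \<in> g ` A \<or> oe1 \<in> g ` A)) \<and>
         (CHAR('a) = 2 \<longrightarrow>
           (\<forall>A :: 'a oct set.
              is_subalgebra A \<and> A \<noteq> {ozero} \<and> \<not> A \<subseteq> O0 \<longrightarrow>
              (\<exists>g\<in>G2. oe1 \<in> g ` A)))"
  using nonzero_subalgebra_G2_image char2_subalgebra_G2_image_oe1 by blast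

end
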